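(* Consider the two-channel (Paris metro pricing) model described in the context, where $\phi$ is an increasing concave differentiable function with $\phi(x)\ge 0$ for all $x\ge0$. Then in the ISP's revenue maximization problem, the optimal consumer threshold is always $x_t=x_0$ (for any value of the CP cost parameter $a$, which does not enter the problem).
   Context: Model: fix $\gamma>2$, $\beta>2$, $\lambda>0$. Consumer types have density $x^{-\gamma}$ on $x\ge x_0:=(\frac{1}{\gamma-1})^{\frac{1}{\gamma-1}}$, CP types density $y^{-\beta}$ on $y\ge y_0:=(\frac{1}{\beta-1})^{\frac{1}{\beta-1}}$; $\bar X=\int_{x_0}^\infty x^{1-\gamma}dx$, $\bar Y=\int_{y_0}^\infty y^{1-\beta}dy$, $T_0=\bar X\bar Y$. The ISP splits capacity $1$ into a pay channel of capacity $B_1\in[0,1]$ and a free channel of capacity $1-B_1$. Consumers of type $\ge x_t$ participate; CPs of type $\ge y_t$ use the pay channel (paying $by$ for type $y$), CPs of type in $[y_0,y_t)$ use the free channel. Channel traffics are $T_1=\sqrt{B_1T_0\int_{x_t}^\infty x^{1-\gamma}dx\int_{y_t}^\infty y^{1-\beta}dy}$ and $T_2=\sqrt{(1-B_1)T_0\int_{x_t}^\infty x^{1-\gamma}dx\int_{y_0}^{y_t}y^{1-\beta}dy}$, with speeds $B_1T_0/T_1$ and $(1-B_1)T_0/T_2$. The membership fee and CP fee are set so threshold types are indifferent: $c=\phi\big((\int_{y_0}^{y_t}\frac{(1-B_1)T_0}{T_2}y^{1-\beta}dy+\int_{y_t}^\infty\frac{B_1T_0}{T_1}y^{1-\beta}dy)x_t\big)$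 and $\lambda y_t\int_{x_t}^\infty\frac{B_1T_0}{T_1}x^{1-\gamma}dx-by_t=\lambda y_t\int_{x_t}^\infty\frac{(1-B_1)T_0}{T_2}x^{1-\gamma}dx$. The ISP solves $\max_{x_t,y_t,B_1} R=c\int_{x_t}^\infty x^{-\gamma}dx+b\int_{y_t}^\infty y^{1-\beta}dy$ subject to $x_t\ge x_0$, $y_t\ge y_0$, $\frac{B_1T_0}{T_1}\ge\frac{(1-B_1)T_0}{T_2}$, $0\le B_1\le1$. *)

theory Defs
  imports "HOL-Analysis.Analysis"
begin

definition x0 :: "real \<Rightarrow> real" where
  "x0 gam = (1 / (gam - 1)) powr (1 / (gam - 1))"

definition y0 :: "real \<Rightarrow> real" where
  "y0 bet = (1 / (bet - 1)) powr (1 / (bet - 1))"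

definition Xbar :: "real \<Rightarrow> real" where
  "Xbar gam = (LBINT x:{x0 gam..}. x powr (1 - gam))"

definition Ybar :: "real \<Rightarrow> real" where
  "Ybar bet = (LBINT y:{y0 bet..}. y powr (1 - bet))"

definition T0 :: "real \<Rightarrow> real \<Rightarrow> real" where
  "T0 gam bet = Xbar gam * Ybar bet"

text \<open>Traffic of the pay channel (1) and of the free channel (2).\<close>
definition T1 :: "real \<Rightarrow> real \<Rightarrow> real \<Rightarrow> real \<Rightarrow> real \<Rightarrow> real" where
  "T1 gam bet xt yt B1 = sqrt (B1 * T0 gam bet * (LBINT x:{xt..}. x powr (1 - gam))
                              * (LBINT y:{yt..}. y powr (1 - bet)))"

definition T2 :: "real \<Rightarrow> real \<Rightarrow> real \<Rightarrow> real \<Rightarrow> real \<Rightarrow> real" where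
  "T2 gam bet xt yt B1 = sqrt ((1 - B1) * T0 gam bet * (LBINT x:{xt..}. x powr (1 - gam))
                              * (LBINT y:{y0 bet..<yt}. y powr (1 - bet)))"

definition speed1 :: "real \<Rightarrow> real \<Rightarrow> real \<Rightarrow> real \<Rightarrow> real \<Rightarrow> real" where
  "speed1 gam bet xt yt B1 = B1 * T0 gam bet / T1 gam bet xt yt B1"

definition speed2 :: "real \<Rightarrow> real \<Rightarrow> real \<Rightarrow> real \<Rightarrow> real \<Rightarrow> real" where
  "speed2 gam bet xt yt B1 = (1 - B1) * T0 gam bet / T2 gam bet xt yt B1"

text \<open>Membership fee c: threshold consumer is indifferent.\<close>
definition fee_c :: "(real \<Rightarrow> real) \<Rightarrow> real \<Rightarrow> real \<Rightarrow> real \<Rightarrow> real \<Rightarrow> real \<Rightarrow> real" where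
  "fee_c \<phi> gam bet xt yt B1 =
     \<phi> (((LBINT y:{y0 bet..<yt}. speed2 gam bet xt yt B1 * y powr (1 - bet))
         + (LBINT y:{yt..}. speed1 gam bet xt yt B1 * y powr (1 - bet))) * xt)"

text \<open>CP fee b: the unique solution of the threshold-CP indifference equation
  lam*yt*\<integral> s1 x^(1-gam) - b*yt = lam*yt*\<integral> s2 x^(1-gam) (note yt > 0).\<close>
definition fee_b :: "real \<Rightarrow> real \<Rightarrow> real \<Rightarrow> real \<Rightarrow> real \<Rightarrow> real \<Rightarrow> real" where
  "fee_b lam gam bet xt yt B1 =
     (lam * yt * (LBINT x:{xt..}. speed1 gam bet xt yt B1 * x powr (1 - gam))
      - lam * yt * (LBINT x:{xt..}. speed2 gam bet xt yt B1 * x powr (1 - gam))) / yt"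

definition revenue ::
  "(real \<Rightarrow> real) \<Rightarrow> real \<Rightarrow> real \<Rightarrow> real \<Rightarrow> real \<Rightarrow> real \<Rightarrow> real \<Rightarrow> real" where
  "revenue \<phi> lam gam bet xt yt B1 =
     fee_c \<phi> gam bet xt yt B1 * (LBINT x:{xt..}. x powr (- gam))
     + fee_b lam gam bet xt yt B1 * (LBINT y:{yt..}. y powr (1 - bet))"

definition feasible :: "real \<Rightarrow> real \<Rightarrow> real \<Rightarrow> real \<Rightarrow> real \<Rightarrow> bool" where
  "feasible gam bet xt yt B1 \<longleftrightarrow>
     xt \<ge> x0 gam \<and> yt \<ge> y0 bet \<and>
     speed1 gam bet xt yt B1 \<ge> speed2 gam bet xt yt B1 \<and> 0 \<le> B1 \<and> B1 \<le> 1"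

end

theory Submission
  imports Defs
begin

text \<open>After evaluating the power integrals, both channel speeds are multiples \<open>P w\<close>, \<open>Q w\<close> of
  the same positive factor \<open>w = sqrt (gam - 2) xt^(gam/2 - 1)\<close>, with \<open>P, Q\<close> independent of
  \<open>xt\<close>; so feasibility (\<open>P \<ge> Q\<close>) does not depend on \<open>xt\<close>, and the revenue takes the form
  \<open>c \<phi>(s xt^(gam/2)) xt^(1-gam) + d xt^(1-gam/2)\<close> with \<open>c > 0\<close>, \<open>s, d \<ge> 0\<close>.
  For concave \<open>\<phi>\<close> with \<open>\<phi> 0 \<ge> 0\<close> we have \<open>t \<phi> v \<le> \<phi> (t v)\<close> for \<open>t \<le> 1\<close>, which makes
  both terms nonincreasing in \<open>xt\<close>, strictly unless the revenue vanishes. The revenue at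
  \<open>(x0, y0, B1 = 1)\<close> is positive, so every maximiser has \<open>xt = x0\<close>.\<close>

lemma concave_on_scale_ge:
  fixes \<phi> :: "real \<Rightarrow> real"
  assumes "concave_on {0..} \<phi>" "\<phi> 0 \<ge> 0" "0 \<le> t" "t \<le> 1" "0 \<le> v"
  shows "t * \<phi> v \<le> \<phi> (t * v)"
proof -
  have "(1 - t) * \<phi> 0 + t * \<phi> v \<le> \<phi> ((1 - t) *\<^sub>R 0 + t *\<^sub>R v)"
    using concave_onD[OF assms(1,3,4), of 0 v] assms(5) by simp
  moreover have "0 \<le> (1 - t) * \<phi> 0"
    using assms(2,4) by simp
  ultimately show ?thesis
    using assms(5) by simp
qed

lemma powr_profile_decreasing:
  fixes \<phi> :: "real \<Rightarrow> real"
  assumes conc: "concave_on {0..} \<phi>" and nonneg: "\<forall>x\<ge>0. \<phi> x \<ge> 0"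
    and "p > 1" "s \<ge> 0" "c > 0" "d \<ge> 0" "0 < a" "a < b"
  defines "F \<equiv> \<lambda>x. c * \<phi> (s * x powr p) * x powr (1 - 2 * p) + d * x powr (1 - p)"
  shows "F b \<le> F a" and "0 < F b \<Longrightarrow> F b < F a"
proof -
  define u where "u = \<phi> (s * a powr p)"
  define v where "v = \<phi> (s * b powr p)"
  have b: "b > 0" using assms by simp
  have u: "u \<ge> 0" using nonneg assms by (simp add: u_def)
  have v: "v \<ge> 0" using nonneg assms b by (simp add: v_def)
  have decr: "b powr (1 - p) < a powr (1 - p)"
    using assms by (intro powr_less_mono2_neg) auto
  have t: "0 < (a / b) powr p" "(a / b) powr p \<le> 1"
    using assms powr_mono2[of p "a / b" 1] by auto
  have star: "(a / b) powr p * v \<le> u"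
    using concave_on_scale_ge[OF conc _ less_imp_le[OF t(1)] t(2), of "s * b powr p"] nonneg assms b
    by (simp add: u_def v_def powr_divide mult.commute)
  define w where "w = a powr (- p) * b powr (1 - p)"
  have v_factor: "v * b powr (1 - 2 * p) = ((a / b) powr p * v) * w"
    using assms b by (simp add: w_def powr_divide powr_minus powr_add[symmetric] field_simps)
  have w: "0 < w" "w < a powr (1 - 2 * p)"
  proof -
    have "a powr (- p) * a powr (1 - p) = a powr (1 - 2 * p)"
      using assms by (simp add: powr_add[symmetric])
    then show "w < a powr (1 - 2 * p)"
      unfolding w_def using mult_strict_left_mono[OF decr, of "a powr (- p)"] assms by simp
  qed (use assms b in \<open>simp add: w_def\<close>)
  have v_bound: "v * b powr (1 - 2 * p) \<le> u * w"
    unfolding v_factor using star w by (intro mult_right_mono) auto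
  have consumer: "c * v * b powr (1 - 2 * p) \<le> c * u * a powr (1 - 2 * p)"
    "0 < u \<Longrightarrow> c * v * b powr (1 - 2 * p) < c * u * a powr (1 - 2 * p)"
  proof -
    have "u * w \<le> u * a powr (1 - 2 * p)" using u w by (intro mult_left_mono) auto
    then show "c * v * b powr (1 - 2 * p) \<le> c * u * a powr (1 - 2 * p)"
      using v_bound assms by (simp add: mult.assoc)
    assume "0 < u"
    then have "u * w < u * a powr (1 - 2 * p)" using w by simp
    then show "c * v * b powr (1 - 2 * p) < c * u * a powr (1 - 2 * p)"
      using v_bound assms by (simp add: mult.assoc)
  qed
  have business: "d * b powr (1 - p) \<le> d * a powr (1 - p)"
    "0 < d \<Longrightarrow> d * b powr (1 - p) < d * a powr (1 - p)"
    using mult_left_mono[OF less_imp_le[OF decr], of d] mult_strict_left_mono[OF decr, of d] assms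
    by simp_all
  show "F b \<le> F a"
    unfolding F_def using consumer(1) business(1) by (simp add: u_def v_def)
  assume pos: "0 < F b"
  have "0 < u \<or> 0 < d"
  proof (rule ccontr)
    assume "\<not> (0 < u \<or> 0 < d)"
    then have "u = 0" "d = 0" using u assms by auto
    with star t(1) v have "v = 0" by (metis mult_le_0_iff not_le order_antisym)
    with pos \<open>d = 0\<close> show False by (simp add: F_def v_def)
  qed
  then show "F b < F a"
    unfolding F_def using consumer business by (auto simp: u_def v_def intro: add_less_le_mono add_le_less_mono)
qed

lemma set_integral_powr_atLeast:
  fixes a e :: real
  assumes "e < -1" "a > 0"
  shows "(LBINT x:{a..}. x powr e) = a powr (e + 1) / (- e - 1)"
proof -
  have int: "((\<lambda>x. x powr e) has_integral - (a powr (e + 1)) / (e + 1)) {a..}"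
    using has_integral_powr_to_inf[OF assms] .
  then have abs_int: "(\<lambda>x. x powr e) absolutely_integrable_on {a..}"
    by (intro nonnegative_absolutely_integrable_1) (auto simp: integrable_on_def)
  have "(LBINT x:{a..}. x powr e) = (LINT x:{a..}|lebesgue. x powr e)"
    unfolding set_lebesgue_integral_def by (rule integral_completion[symmetric]) measurable
  also have "\<dots> = integral {a..} (\<lambda>x. x powr e)"
    using abs_int by (rule set_lebesgue_integral_eq_integral)
  finally show ?thesis
    using integral_unique[OF int] by (simp add: minus_divide_right)
qed

lemma set_integral_powr_nonneg: "(LBINT x:A. x powr (e::real)) \<ge> 0"
  unfolding set_lebesgue_integral_def
  by (intro integral_nonneg_AE) (auto simp: indicator_def)

lemma x0_pos: "gam > 1 \<Longrightarrow> x0 gam > 0"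
  by (simp add: x0_def)

lemma y0_pos: "bet > 1 \<Longrightarrow> y0 bet > 0"
  by (simp add: y0_def)

lemma T0_pos:
  assumes "gam > 2" "bet > 2"
  shows "T0 gam bet > 0"
  using assms by (simp add: T0_def Xbar_def Ybar_def x0_def y0_def set_integral_powr_atLeast)

lemma divide_sqrt_mult:
  fixes a p q :: real
  assumes "a \<ge> 0" "p \<ge> 0" "q \<ge> 0"
  shows "a / sqrt (a * p * q) = sqrt (a / q) / sqrt p"
proof (cases "a = 0 \<or> p = 0 \<or> q = 0")
  case False
  then have "a > 0" "p > 0" "q > 0" using assms by auto
  then show ?thesis by (simp add: real_sqrt_mult real_sqrt_divide field_simps)
qed auto

lemma speeds_and_revenue_eq:
  fixes \<phi> :: "real \<Rightarrow> real"
  assumes "gam > 2" "bet > 2" "xt > 0" "yt \<ge> y0 bet" "0 \<le> B1" "B1 \<le> 1"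
    and J1_def: "J1 = (LBINT y:{yt..}. y powr (1 - bet))"
    and J2_def: "J2 = (LBINT y:{y0 bet..<yt}. y powr (1 - bet))"
  defines "P \<equiv> sqrt (B1 * T0 gam bet / J1)"
    and "Q \<equiv> sqrt ((1 - B1) * T0 gam bet / J2)"
    and "w \<equiv> sqrt (gam - 2) * xt powr (gam / 2 - 1)"
  shows "speed1 gam bet xt yt B1 = P * w"
    and "speed2 gam bet xt yt B1 = Q * w"
    and "revenue \<phi> lam gam bet xt yt B1 =
           1 / (gam - 1) * \<phi> (sqrt (gam - 2) * (Q * J2 + P * J1) * xt powr (gam / 2)) * xt powr (1 - gam)
           + lam * (P - Q) * J1 / sqrt (gam - 2) * xt powr (1 - gam / 2)"
proof -
  define I where "I = xt powr (2 - gam) / (gam - 2)"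
  have yt: "yt > 0" using y0_pos[of bet] assms by simp
  have T0: "T0 gam bet > 0" using T0_pos assms by simp
  have I_eq: "(LBINT x:{xt..}. x powr (1 - gam)) = I"
    using assms by (simp add: I_def set_integral_powr_atLeast)
  have I: "I > 0" using assms by (simp add: I_def)
  have J1: "J1 > 0" using assms yt by (simp add: J1_def set_integral_powr_atLeast)
  have J2: "J2 \<ge> 0" unfolding J2_def by (rule set_integral_powr_nonneg)
  have "sqrt I = xt powr (1 - gam / 2) / sqrt (gam - 2)"
    using assms by (simp add: I_def real_sqrt_divide powr_half_sqrt[symmetric] powr_powr diff_divide_distrib)
  moreover have "xt powr (gam / 2 - 1) = 1 / xt powr (1 - gam / 2)"
    by (metis minus_diff_eq powr_minus_divide)
  ultimately have sqrt_I: "1 / sqrt I = w"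
    by (simp add: w_def)
  show s1: "speed1 gam bet xt yt B1 = P * w"
    unfolding speed1_def T1_def I_eq J1_def[symmetric] P_def sqrt_I[symmetric]
    using divide_sqrt_mult[of "B1 * T0 gam bet" I J1] assms T0 I J1 by simp
  show s2: "speed2 gam bet xt yt B1 = Q * w"
    unfolding speed2_def T2_def I_eq J2_def[symmetric] Q_def sqrt_I[symmetric]
    using divide_sqrt_mult[of "(1 - B1) * T0 gam bet" I J2] assms T0 I J2 by simp
  have wx: "w * xt = sqrt (gam - 2) * xt powr (gam / 2)"
    using assms by (simp add: w_def powr_diff)
  have wI: "w * I = xt powr (1 - gam / 2) / sqrt (gam - 2)"
  proof -
    have "w * I = sqrt (gam - 2) / (gam - 2) * (xt powr (gam / 2 - 1) * xt powr (2 - gam))"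
      by (simp add: w_def I_def)
    moreover have "sqrt (gam - 2) / (gam - 2) = 1 / sqrt (gam - 2)"
      using assms by (simp add: field_simps)
    moreover have "xt powr (gam / 2 - 1) * xt powr (2 - gam) = xt powr (1 - gam / 2)"
      by (simp add: powr_add[symmetric])
    ultimately show ?thesis by simp
  qed
  have "fee_c \<phi> gam bet xt yt B1 = \<phi> ((Q * J2 + P * J1) * (w * xt))"
    unfolding fee_c_def s1 s2 set_integral_mult_right J1_def[symmetric] J2_def[symmetric]
    by (simp add: algebra_simps)
  also have "\<dots> = \<phi> (sqrt (gam - 2) * (Q * J2 + P * J1) * xt powr (gam / 2))"
    unfolding wx by (simp add: ac_simps)
  finally have fee_c: "fee_c \<phi> gam bet xt yt B1 = \<dots>" .
  have "fee_b lam gam bet xt yt B1 = lam * (P - Q) * (w * I)"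
    unfolding fee_b_def s1 s2 set_integral_mult_right I_eq using yt
    by (simp add: field_simps)
  then have fee_b: "fee_b lam gam bet xt yt B1 = lam * (P - Q) / sqrt (gam - 2) * xt powr (1 - gam / 2)"
    unfolding wI by simp
  show "revenue \<phi> lam gam bet xt yt B1 =
           1 / (gam - 1) * \<phi> (sqrt (gam - 2) * (Q * J2 + P * J1) * xt powr (gam / 2)) * xt powr (1 - gam)
           + lam * (P - Q) * J1 / sqrt (gam - 2) * xt powr (1 - gam / 2)"
    unfolding revenue_def fee_c fee_b J1_def using assms by (simp add: set_integral_powr_atLeast)
qed

lemma revenue_decreasing_in_consumer_threshold:
  fixes \<phi> :: "real \<Rightarrow> real"
  assumes "gam > 2" "bet > 2" "lam > 0"
    and conc: "concave_on {0..} \<phi>" and nonneg: "\<forall>x\<ge>0. \<phi> x \<ge> 0"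
    and feas: "feasible gam bet xt yt B1" and xt: "x0 gam < xt"
  shows "feasible gam bet (x0 gam) yt B1"
    and "revenue \<phi> lam gam bet xt yt B1 \<le> revenue \<phi> lam gam bet (x0 gam) yt B1"
    and "0 < revenue \<phi> lam gam bet xt yt B1 \<Longrightarrow>
           revenue \<phi> lam gam bet xt yt B1 < revenue \<phi> lam gam bet (x0 gam) yt B1"
proof -
  define J1 where "J1 = (LBINT y:{yt..}. y powr (1 - bet))"
  define J2 where "J2 = (LBINT y:{y0 bet..<yt}. y powr (1 - bet))"
  define P where "P = sqrt (B1 * T0 gam bet / J1)"
  define Q where "Q = sqrt ((1 - B1) * T0 gam bet / J2)"
  have x0: "x0 gam > 0" using x0_pos assms by simp
  have feasD: "yt \<ge> y0 bet" "0 \<le> B1" "B1 \<le> 1" "speed2 gam bet xt yt B1 \<le> speed1 gam bet xt yt B1"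
    using feas by (auto simp: feasible_def)
  have J1: "J1 > 0"
    using assms y0_pos[of bet] feasD by (simp add: J1_def set_integral_powr_atLeast)
  have J2: "J2 \<ge> 0" unfolding J2_def by (rule set_integral_powr_nonneg)
  note eq = speeds_and_revenue_eq[OF assms(1,2) _ feasD(1-3) J1_def J2_def, folded P_def Q_def]
  have speed_factor: "0 < sqrt (gam - 2) * t powr (gam / 2 - 1)" if "t > 0" for t
    using assms that by simp
  have "xt > 0" using x0 xt by simp
  then have PQ: "0 \<le> Q" "Q \<le> P"
    using feasD eq(1,2) speed_factor T0_pos[OF assms(1,2)] J2
    by (auto simp: Q_def intro: mult_right_le_imp_le)
  show "feasible gam bet (x0 gam) yt B1"
    using eq(1,2)[OF x0] PQ feasD x0 speed_factor[OF x0] by (simp add: feasible_def mult_right_mono)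
  have "0 \<le> sqrt (gam - 2) * (Q * J2 + P * J1)" "0 \<le> lam * (P - Q) * J1 / sqrt (gam - 2)"
    using PQ J1 J2 assms by simp_all
  note profile = powr_profile_decreasing[OF conc nonneg _ this(1) _ this(2) x0 xt, of "gam / 2" "1 / (gam - 1)"]
  show "revenue \<phi> lam gam bet xt yt B1 \<le> revenue \<phi> lam gam bet (x0 gam) yt B1"
    "0 < revenue \<phi> lam gam bet xt yt B1 \<Longrightarrow>
           revenue \<phi> lam gam bet xt yt B1 < revenue \<phi> lam gam bet (x0 gam) yt B1"
    using profile assms x0 xt by (simp_all add: eq)
qed

lemma revenue_pos_at_minimal_thresholds:
  fixes \<phi> :: "real \<Rightarrow> real"
  assumes "gam > 2" "bet > 2" "lam > 0" and nonneg: "\<forall>x\<ge>0. \<phi> x \<ge> 0"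
  shows "feasible gam bet (x0 gam) (y0 bet) 1"
    and "0 < revenue \<phi> lam gam bet (x0 gam) (y0 bet) 1"
proof -
  define J1 where "J1 = (LBINT y:{y0 bet..}. y powr (1 - bet))"
  define P where "P = sqrt (T0 gam bet / J1)"
  have x0: "x0 gam > 0" using x0_pos assms by simp
  have J1: "J1 > 0"
    using assms y0_pos[of bet] by (simp add: J1_def set_integral_powr_atLeast)
  have P: "P > 0" using T0_pos[OF assms(1,2)] J1 by (simp add: P_def)
  \<comment> \<open>With \<open>B1 = 1\<close> the free channel has no capacity, so \<open>Q = 0\<close> and the CP fee is positive.\<close>
  note eq = speeds_and_revenue_eq[OF assms(1,2) x0 order_refl _ order_refl J1_def refl, simplified, folded P_def]
  show "feasible gam bet (x0 gam) (y0 bet) 1"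
    using eq(1,2) P x0 assms by (simp add: feasible_def)
  have "0 \<le> \<phi> (sqrt (gam - 2) * (P * J1) * x0 gam powr (gam / 2))"
    using nonneg P J1 x0 assms by simp
  then show "0 < revenue \<phi> lam gam bet (x0 gam) (y0 bet) 1"
    using eq(3) P J1 x0 assms by (simp add: add_nonneg_pos)
qed

theorem theorem6:
  fixes gam bet lam :: real and \<phi> :: "real \<Rightarrow> real"
  assumes "gam > 2" and "bet > 2" and "lam > 0"
    and "mono_on {0..} \<phi>"
    and "concave_on {0..} \<phi>"
    and "\<forall>x\<ge>0. \<phi> differentiable (at x within {0..})"
    and "\<forall>x\<ge>0. \<phi> x \<ge> 0"
  shows "(\<forall>xt yt B1. feasible gam bet xt yt B1 \<longrightarrow>
            feasible gam bet (x0 gam) yt B1 \<and>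
            revenue \<phi> lam gam bet xt yt B1 \<le> revenue \<phi> lam gam bet (x0 gam) yt B1)
       \<and> (\<forall>xt yt B1. feasible gam bet xt yt B1 \<and>
            (\<forall>xt' yt' B1'. feasible gam bet xt' yt' B1' \<longrightarrow>
                revenue \<phi> lam gam bet xt' yt' B1' \<le> revenue \<phi> lam gam bet xt yt B1)
            \<longrightarrow> xt = x0 gam)"
proof (rule conjI; intro allI impI)
  fix xt yt B1 assume feas: "feasible gam bet xt yt B1"
  then have "x0 gam \<le> xt" by (simp add: feasible_def)
  then consider "xt = x0 gam" | "x0 gam < xt" by linarith
  then show "feasible gam bet (x0 gam) yt B1 \<and>
      revenue \<phi> lam gam bet xt yt B1 \<le> revenue \<phi> lam gam bet (x0 gam) yt B1"
  proof cases
    case 2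
    with revenue_decreasing_in_consumer_threshold[OF assms(1-3,5,7) feas] show ?thesis by simp
  qed (use feas in simp)
next
  fix xt yt B1
  assume "feasible gam bet xt yt B1 \<and>
    (\<forall>xt' yt' B1'. feasible gam bet xt' yt' B1' \<longrightarrow>
       revenue \<phi> lam gam bet xt' yt' B1' \<le> revenue \<phi> lam gam bet xt yt B1)"
  then have feas: "feasible gam bet xt yt B1"
    and opt: "\<And>xt' yt' B1'. feasible gam bet xt' yt' B1' \<Longrightarrow>
       revenue \<phi> lam gam bet xt' yt' B1' \<le> revenue \<phi> lam gam bet xt yt B1"
    by auto
  show "xt = x0 gam"
  proof (rule ccontr)
    assume "xt \<noteq> x0 gam"
    with feas have "x0 gam < xt" by (simp add: feasible_def)
    note decr = revenue_decreasing_in_consumer_threshold[OF assms(1-3,5,7) feas this]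
    note pos = revenue_pos_at_minimal_thresholds[OF assms(1-3,7)]
    have "0 < revenue \<phi> lam gam bet xt yt B1"
      using opt[OF pos(1)] pos(2) by linarith
    then show False
      using decr(3) opt[OF decr(1)] by linarith
  qed
qed

end
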